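(* The Lie group $(\delta+\mathbb{K}^m\langle\langle X\rangle\rangle,\circ,\delta)$ (Fréchet topology) is $C^0$-regular.
   Context: $\mathbb{K}\in\{\mathbb{R},\mathbb{C}\}$. $X=\{x_0,x_1,\ldots,x_m\}$ is a finite alphabet, $X^\ast$ its words (including $\emptyset$). $\mathbb{K}^m\langle\langle X\rangle\rangle$ is the space of maps $X^\ast\to\mathbb{K}^m$ with the Fréchet (product) topology; $d[i]$ is the $i$-th component of $d$. $\delta+\mathbb{K}^m\langle\langle X\rangle\rangle=\{\delta+c\}$, $\delta$ a formal symbol, an affine space modelled on $\mathbb{K}^m\langle\langle X\rangle\rangle$. The shuffle product $\sqcup\!\sqcup$ is determined on words by $(x_i\eta)\sqcup\!\sqcup(x_j\xi)=x_i(\eta\sqcup\!\sqcup(x_j\xi))+x_j((x_i\eta)\sqcup\!\sqcup\xi)$, $\eta\sqcup\!\sqcup\emptyset=\emptyset\sqcup\!\sqcup\eta=\eta$. Mixed composition: with $d[0]:=0$, $\phi_d(\emptyset)=\mathrm{id}$, $\phi_d(x_i\eta)=\phi_d(x_i)\circ\phi_d(\eta)$, $\phi_d(x_i)(e)=x_ie+x_0(d[i]\sqcup\!\sqcup e)$, $c\,\tilde\circ\,d_\delta=\sum_\eta(c,\eta)\phi_d(\eta)(1\cdot\emptyset)$; group product $(\delta+c)\circ(\delta+d)=\delta+d+c\,\tilde\circ\,d_\delta$, identity $\delta$; this is an analytic Lie group with Lie algebra $\mathbb{K}^m\langle\langle X\rangle\rangle$. A Lie group $G$ with unit $1$ and Lie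 algebra $\mathbf{L}(G)$ is $C^0$-regular if for every continuous curve $u\colon[0,1]\to\mathbf{L}(G)$ the initial value problem $\dot\gamma(t)=T\lambda_{\gamma(t)}(u(t))$, $\gamma(0)=1$ (with $\lambda_g(h)=gh$) has a $C^1$-solution $\mathrm{Evol}(u)\colon[0,1]\to G$, and the map $\mathrm{evol}\colon C^0([0,1],\mathbf{L}(G))\to G$, $u\mapsto\mathrm{Evol}(u)(1)$, is smooth (Bastiani sense), where $C^0([0,1],\mathbf{L}(G))$ carries the compact-open topology. *)

theory Defs
  imports "HOL-Analysis.Analysis"
begin

text \<open>Alphabet X = {x_0,...,x_m} is encoded as 'n option with 'n finite, m = CARD('n):
  None = x_0, Some i = x_i.  K-valued series are maps
  words => 'a, K^m-valued series are maps words => 'n => 'a (component d w i = (d,w)[i]).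
  The Frechet (product) topology is the product topology of the function type.
  A group element delta + c is represented by c; delta corresponds to 0.\<close>

type_synonym ('n,'a) sser = "'n option list \<Rightarrow> 'a"
type_synonym ('n,'a) vser = "'n option list \<Rightarrow> 'n \<Rightarrow> 'a"

fun shw :: "'b list \<Rightarrow> 'b list \<Rightarrow> 'b list list" where
  "shw [] ys = [ys]"
| "shw xs [] = [xs]"
| "shw (x#xs) (y#ys) = map ((#) x) (shw xs (y#ys)) @ map ((#) y) (shw (x#xs) ys)"

definition shuffle :: "('n::finite,'a::comm_ring_1) sser \<Rightarrow> ('n,'a) sser \<Rightarrow> ('n,'a) sser" where
  "shuffle c e = (\<lambda>\<nu>. \<Sum>p\<in>{(\<alpha>,\<beta>). length \<alpha> + length \<beta> = length \<nu>}.
      c (fst p) * e (snd p) * of_nat (count_list (shw (fst p) (snd p)) \<nu>))"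

definition lcat :: "'n option \<Rightarrow> ('n,'a::zero) sser \<Rightarrow> ('n,'a) sser" where
  "lcat x e = (\<lambda>w. case w of [] \<Rightarrow> 0 | y # w' \<Rightarrow> (if y = x then e w' else 0))"

definition dcomp :: "('n,'a::zero) vser \<Rightarrow> 'n option \<Rightarrow> ('n,'a) sser" where
  "dcomp d x = (case x of None \<Rightarrow> (\<lambda>w. 0) | Some i \<Rightarrow> (\<lambda>w. d w i))"

definition phiL :: "('n::finite,'a::comm_ring_1) vser \<Rightarrow> 'n option \<Rightarrow> ('n,'a) sser \<Rightarrow> ('n,'a) sser" where
  "phiL d x e = (\<lambda>w. lcat x e w + lcat None (shuffle (dcomp d x) e) w)"

fun phi :: "('n::finite,'a::comm_ring_1) vser \<Rightarrow> 'n option list \<Rightarrow> ('n,'a) sser" where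
  "phi d [] = (\<lambda>w. if w = [] then 1 else 0)"
| "phi d (x # \<eta>) = phiL d x (phi d \<eta>)"

definition mcomp :: "('n::finite,'a::real_normed_field) vser \<Rightarrow> ('n,'a) vser \<Rightarrow> ('n,'a) vser" where
  "mcomp c d = (\<lambda>\<nu> k. \<Sum>\<^sub>\<infinity>\<eta>. c \<eta> k * phi d \<eta> \<nu>)"

text \<open>Group product (delta + c) o (delta + d) = delta + d + c ~o d_delta.\<close>
definition gmul :: "('n::finite,'a::real_normed_field) vser \<Rightarrow> ('n,'a) vser \<Rightarrow> ('n,'a) vser" where
  "gmul c d = (\<lambda>\<nu> k. d \<nu> k + mcomp c d \<nu> k)"

text \<open>C^0([0,1], L(G)): continuous curves on [0,1], extended by 0 outside [0,1].\<close>
definition C0set :: "(real \<Rightarrow> ('n,'a::real_normed_field) vser) set" where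
  "C0set = {u. continuous_on {0..1} u \<and> (\<forall>t. t \<notin> {0..1} \<longrightarrow> u t = (\<lambda>\<nu> k. 0))}"

definition CO_top :: "(real \<Rightarrow> ('n,'a::real_normed_field) vser) topology" where
  "CO_top = subtopology
     (topology_generated_by {{u. u ` K \<subseteq> U} | K U. compact K \<and> K \<subseteq> {0..1} \<and> open U})
     C0set"

text \<open>Bastiani smoothness (over K) of a map C^0([0,1],L(G)) -> L(G):
  D k u vs = d^k F(u; vs 0, ..., vs (k-1)) exist as iterated directional derivatives
  and are continuous on C^0 x (C^0)^k.\<close>
definition bastiani_smooth :: "((real \<Rightarrow> ('n,'a::real_normed_field) vser) \<Rightarrow> ('n,'a) vser) \<Rightarrow> bool" where
  "bastiani_smooth F \<longleftrightarrow>
    (\<exists>D :: nat \<Rightarrow> (real \<Rightarrow> ('n,'a) vser) \<Rightarrow> (nat \<Rightarrow> real \<Rightarrow> ('n,'a) vser) \<Rightarrow> ('n,'a) vser.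
      (\<forall>u\<in>C0set. D 0 u (\<lambda>_. undefined) = F u) \<and>
      (\<forall>k. continuous_map (prod_topology CO_top (product_topology (\<lambda>_. CO_top) {..<k}))
              euclidean (\<lambda>(u, vs). D k u vs)) \<and>
      (\<forall>k u vs v. u \<in> C0set \<and> vs \<in> PiE {..<k} (\<lambda>_. C0set) \<and> v \<in> C0set \<longrightarrow>
         ((\<lambda>s::'a. (\<lambda>\<nu> i. (D k (\<lambda>t \<nu>' j. u t \<nu>' j + s * v t \<nu>' j) vs \<nu> i - D k u vs \<nu> i) / s))
            \<longlongrightarrow> D (Suc k) u (vs(k := v))) (at 0)))"

definition C1_on01 :: "(real \<Rightarrow> ('n,'a::real_normed_field) vser) \<Rightarrow> (real \<Rightarrow> ('n,'a) vser) \<Rightarrow> bool" where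
  "C1_on01 \<gamma> \<gamma>' \<longleftrightarrow> continuous_on {0..1} \<gamma>' \<and>
     (\<forall>t\<in>{0..1}. ((\<lambda>s. (\<lambda>\<nu> k. (\<gamma> s \<nu> k - \<gamma> t \<nu> k) / of_real (s - t))) \<longlongrightarrow> \<gamma>' t)
                    (at t within {0..1}))"

text \<open>gamma is a C^1 solution of gamma' = T lambda_{gamma(t)} (u(t)), gamma(0) = 1 = delta;
  T lambda_g (u) is the derivative at s = 0 of s |-> g o (delta + s u).\<close>
definition solves_evol :: "(real \<Rightarrow> ('n::finite,'a::real_normed_field) vser) \<Rightarrow> (real \<Rightarrow> ('n,'a) vser) \<Rightarrow> bool" where
  "solves_evol u \<gamma> \<longleftrightarrow> \<gamma> 0 = (\<lambda>\<nu> k. 0) \<and>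
     (\<exists>\<gamma>'. C1_on01 \<gamma> \<gamma>' \<and>
        (\<forall>t\<in>{0..1}. ((\<lambda>s::real. (\<lambda>\<nu> k. (gmul (\<gamma> t) (\<lambda>\<nu>' j. of_real s * u t \<nu>' j) \<nu> k - \<gamma> t \<nu> k) / of_real s))
                       \<longlongrightarrow> \<gamma>' t) (at 0)))"

definition C0_regular_G :: "'n::finite itself \<Rightarrow> 'a::real_normed_field itself \<Rightarrow> bool" where
  "C0_regular_G _ _ \<longleftrightarrow>
     (\<forall>u\<in>(C0set :: (real \<Rightarrow> ('n,'a) vser) set). \<exists>\<gamma>. solves_evol u \<gamma>) \<and>
     (\<exists>F :: (real \<Rightarrow> ('n,'a) vser) \<Rightarrow> ('n,'a) vser. bastiani_smooth F \<and>
        (\<forall>u\<in>C0set. \<forall>\<gamma>. solves_evol u \<gamma> \<longrightarrow> F u = \<gamma> 1))"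

end

theory Submission
  imports Defs
begin

text \<open>Read off coefficientwise, the tangent map of left translation is triangular: the
  \<open>\<nu>\<close>-coefficient of \<open>T\<lambda>\<^sub>c(x)\<close> is \<open>x\<^sub>\<nu>\<close> plus a finite linear combination of coefficients \<open>c\<^sub>\<eta>\<close>
  with \<open>weight \<eta> < weight \<nu>\<close>, where the weight of a word is its length with \<open>x\<^sub>0\<close> counted twice.
  Hence \<open>\<gamma>' = T\<lambda>\<^sub>\<gamma>(u)\<close> is solved, uniquely, coefficient by coefficient by recursion on the weight,
  and every coefficient of \<open>Evol(u)(t)\<close> is a finite expression built from constants, coefficients
  of \<open>u\<close>, sums, products and integrals \<open>\<integral>\<^sub>0\<^sup>t\<close>. Such expressions only see finitely many
  coefficients, uniformly on \<open>[0,1]\<close>, so they are continuous for the compact-open topology; and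
  their directional derivatives are again such expressions (product rule, differentiation under
  the integral), which gives smoothness of \<open>evol\<close> to all orders.\<close>

section \<open>The tangent map of left translation is triangular\<close>

lemma mset_shw: "w \<in> set (shw xs ys) \<Longrightarrow> mset w = mset xs + mset ys"
  by (induction xs ys arbitrary: w rule: shw.induct) auto

lemma finite_lists_length_le_UNIV: "finite {xs :: 'a::finite list. length xs \<le> n}"
  using finite_lists_length_le[of "UNIV :: 'a set" n] by simp

lemma finite_list_pairs_length_sum:
  "finite {(xs :: 'a::finite list, ys :: 'a list). length xs + length ys = n}"
  by (rule finite_subset[OF _ finite_cartesian_product[OF
        finite_lists_length_le_UNIV[of n] finite_lists_length_le_UNIV[of n]]]) auto

text \<open>The derivative of \<open>phi\<close> may replace a letter \<open>x\<^sub>i\<close> (\<open>i \<noteq> 0\<close>) by \<open>x\<^sub>0\<close> without changing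
  the length; counting \<open>x\<^sub>0\<close> twice makes the weight grow nevertheless.\<close>
definition weight :: "'n option list \<Rightarrow> nat" where
  "weight \<nu> = length \<nu> + count_list \<nu> None"

lemma lcat_simps [simp]: "lcat x e [] = 0" "lcat x e (y # w) = (if y = x then e w else 0)"
  by (auto simp: lcat_def)

lemma shuffle_zero_left [simp]: "shuffle (\<lambda>w. 0) e = (\<lambda>w. 0)"
  by (auto simp: shuffle_def)

lemma dcomp_zero [simp]: "dcomp (\<lambda>\<nu> j. 0) x = (\<lambda>w. 0)"
  by (auto simp: dcomp_def split: option.splits)

lemma dcomp_scale: "dcomp (\<lambda>\<nu> j. (c::'a::comm_ring_1) * u \<nu> j) x = (\<lambda>w. c * dcomp u x w)"
  by (auto simp: dcomp_def fun_eq_iff split: option.splits)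

lemma phi_zero: "phi (\<lambda>\<nu> j. (0::'a::comm_ring_1)) \<eta> = (\<lambda>w. if w = \<eta> then 1 else 0)"
proof (induction \<eta>)
  case (Cons x \<eta>)
  show ?case
  proof
    fix w show "phi (\<lambda>\<nu> j. 0) (x # \<eta>) w = (if w = x # \<eta> then (1::'a) else 0)"
      by (cases w) (auto simp: phiL_def Cons.IH)
  qed
qed simp

lemma phi_nonzero_imp_length_le: "phi d \<eta> \<nu> \<noteq> 0 \<Longrightarrow> length \<eta> \<le> length \<nu>"
proof (induction \<eta> arbitrary: \<nu>)
  case (Cons x \<eta>)
  show ?case
  proof (cases \<nu>)
    case Nil with Cons show ?thesis by (simp add: phiL_def)
  next
    case (Cons y w)
    show ?thesis
    proof (cases "phi d \<eta> w \<noteq> 0 \<and> y = x")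
      case True with Cons.IH Cons show ?thesis by auto
    next
      case False
      with Cons.prems Cons have "shuffle (dcomp d x) (phi d \<eta>) w \<noteq> 0"
        by (auto simp: phiL_def split: if_splits)
      then obtain p where p: "p \<in> {(\<alpha>,\<beta>). length \<alpha> + length \<beta> = length w}"
        "dcomp d x (fst p) * phi d \<eta> (snd p) * of_nat (count_list (shw (fst p) (snd p)) w) \<noteq> 0"
        unfolding shuffle_def by (meson sum.not_neutral_contains_not_neutral)
      then have "phi d \<eta> (snd p) \<noteq> 0" by auto
      then have "length \<eta> \<le> length (snd p)" by (rule Cons.IH)
      with p(1) Cons show ?thesis by auto
    qed
  qed
qed simp

fun phi_deriv :: "('n::finite,'a::comm_ring_1) vser \<Rightarrow> 'n option list \<Rightarrow> ('n,'a) sser" where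
  "phi_deriv u [] = (\<lambda>w. 0)"
| "phi_deriv u (x # \<eta>) = (\<lambda>w. lcat x (phi_deriv u \<eta>) w
     + lcat None (shuffle (dcomp u x) (\<lambda>w. if w = \<eta> then 1 else 0)) w)"

lemma phi_deriv_Nil_right [simp]: "phi_deriv u \<eta> [] = 0"
  by (cases \<eta>) auto

lemma phi_deriv_Cons_Cons: "phi_deriv u (x # \<eta>) (y # w) = (if y = x then phi_deriv u \<eta> w else 0)
   + (if y = None then shuffle (dcomp u x) (\<lambda>w. if w = \<eta> then 1 else 0) w else 0)"
  by simp

lemma has_field_derivative_phi_deriv:
  fixes u :: "('n::finite,'a::real_normed_field) vser"
  shows "((\<lambda>c. phi (\<lambda>\<nu> j. c * u \<nu> j) \<eta> \<nu>) has_field_derivative phi_deriv u \<eta> \<nu>) (at 0)"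
proof (induction \<eta> arbitrary: \<nu>)
  case (Cons x \<eta>)
  show ?case
  proof (cases \<nu>)
    case Nil then show ?thesis by (simp add: phiL_def)
  next
    case (Cons y w)
    define P where "P = {(\<alpha>::'n option list, \<beta>::'n option list). length \<alpha> + length \<beta> = length w}"
    have sh: "shuffle (dcomp (\<lambda>\<nu> j. c * u \<nu> j) x) (phi (\<lambda>\<nu> j. c * u \<nu> j) \<eta>) w =
       (\<Sum>p\<in>P. c * dcomp u x (fst p) * phi (\<lambda>\<nu> j. c * u \<nu> j) \<eta> (snd p)
          * of_nat (count_list (shw (fst p) (snd p)) w))" for c
      by (simp add: shuffle_def dcomp_scale P_def)
    have sh0: "shuffle (dcomp u x) (\<lambda>w. if w = \<eta> then 1 else 0) w =
       (\<Sum>p\<in>P. dcomp u x (fst p) * phi (\<lambda>\<nu> j. 0 * u \<nu> j) \<eta> (snd p)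
          * of_nat (count_list (shw (fst p) (snd p)) w))"
      by (simp add: shuffle_def P_def phi_zero)
    have "((\<lambda>c. shuffle (dcomp (\<lambda>\<nu> j. c * u \<nu> j) x) (phi (\<lambda>\<nu> j. c * u \<nu> j) \<eta>) w)
        has_field_derivative shuffle (dcomp u x) (\<lambda>w. if w = \<eta> then 1 else 0) w) (at 0)"
      unfolding sh sh0
      by (rule DERIV_sum, rule DERIV_cong, (rule derivative_eq_intros Cons.IH refl)+, simp)
    then have "((\<lambda>c. if y = None then shuffle (dcomp (\<lambda>\<nu> j. c * u \<nu> j) x) (phi (\<lambda>\<nu> j. c * u \<nu> j) \<eta>) w
          else 0) has_field_derivative
        (if y = None then shuffle (dcomp u x) (\<lambda>w. if w = \<eta> then 1 else 0) w else 0)) (at 0)"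
      by (cases y) simp_all
    moreover have "((\<lambda>c. if y = x then phi (\<lambda>\<nu> j. c * u \<nu> j) \<eta> w else 0) has_field_derivative
        (if y = x then phi_deriv u \<eta> w else 0)) (at 0)"
      by (cases "y = x") (simp_all add: Cons.IH)
    ultimately show ?thesis
      unfolding Cons by (simp add: phiL_def DERIV_add add.commute)
  qed
qed simp

lemma phi_deriv_nonzero_imp_weight_less:
  "phi_deriv u \<eta> \<nu> \<noteq> 0 \<Longrightarrow> length \<eta> \<le> length \<nu> \<and> weight \<eta> < weight \<nu>"
proof (induction \<eta> arbitrary: \<nu>)
  case (Cons x \<eta>)
  show ?case
  proof (cases \<nu>)
    case Nil with Cons show ?thesis by simp
  next
    case (Cons y w)
    show ?thesis
    proof (cases "y = x \<and> phi_deriv u \<eta> w \<noteq> 0")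
      case True
      with Cons.IH[of w] show ?thesis unfolding Cons by (auto simp: weight_def)
    next
      case False
      with Cons.prems Cons have y: "y = None" and
        "shuffle (dcomp u x) (\<lambda>w. if w = \<eta> then 1 else 0) w \<noteq> 0"
        by (auto simp: phi_deriv_Cons_Cons split: if_splits)
      then obtain p where p: "p \<in> {(\<alpha>,\<beta>). length \<alpha> + length \<beta> = length w}"
        "dcomp u x (fst p) * (if snd p = \<eta> then 1 else 0) * of_nat (count_list (shw (fst p) (snd p)) w) \<noteq> 0"
        unfolding shuffle_def by (meson sum.not_neutral_contains_not_neutral)
      then have x: "x \<noteq> None" and "snd p = \<eta>" and "count_list (shw (fst p) (snd p)) w \<noteq> 0"
        by (auto simp: dcomp_def split: if_splits option.splits intro: gr0I)
      then have "mset w = mset (fst p) + mset \<eta>"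
        by (auto simp: count_list_0_iff intro: mset_shw)
      then have "length w = length (fst p) + length \<eta>"
        and "count_list w None = count_list (fst p) None + count_list \<eta> None"
        by (metis size_mset size_union, metis count_mset count_union)
      with x show ?thesis unfolding Cons y by (auto simp: weight_def)
    qed
  qed
qed simp

definition finite_linear :: "(('n,'a::comm_ring_1) vser \<Rightarrow> 'a) \<Rightarrow> bool" where
  "finite_linear L \<longleftrightarrow> (\<exists>S a. finite S \<and> (\<forall>x. L x = (\<Sum>c\<in>S. a c * x (fst c) (snd c))))"

lemma finite_linear_zero [simp]: "finite_linear (\<lambda>x. 0)"
  unfolding finite_linear_def by (rule exI[of _ "{}"]) auto

lemma finite_linear_coeff [simp]: "finite_linear (\<lambda>x. x \<alpha> i)"
  unfolding finite_linear_def by (rule exI[of _ "{(\<alpha>,i)}"], rule exI[of _ "\<lambda>_. 1"]) auto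

lemma finite_linear_mult_const: "finite_linear L \<Longrightarrow> finite_linear (\<lambda>x. L x * b)"
proof -
  assume "finite_linear L"
  then have "finite_linear (\<lambda>x. b * L x)"
    unfolding finite_linear_def
    by (auto simp: sum_distrib_left mult.assoc intro!: exI[of _ "\<lambda>c. b * _ c"])
  then show ?thesis by (simp add: mult.commute)
qed

lemma finite_linear_add:
  assumes "finite_linear L1" "finite_linear L2" shows "finite_linear (\<lambda>x. L1 x + L2 x)"
proof -
  from assms obtain S1 a1 S2 a2 where f: "finite S1" "finite S2"
    and e1: "\<And>x. L1 x = (\<Sum>c\<in>S1. a1 c * x (fst c) (snd c))"
    and e2: "\<And>x. L2 x = (\<Sum>c\<in>S2. a2 c * x (fst c) (snd c))"
    unfolding finite_linear_def by blast
  define b where "b c = (if c \<in> S1 then a1 c else 0) + (if c \<in> S2 then a2 c else 0)" for c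
  have "L1 x + L2 x = (\<Sum>c\<in>S1 \<union> S2. b c * x (fst c) (snd c))" for x
  proof -
    have "L1 x = (\<Sum>c\<in>S1 \<union> S2. (if c \<in> S1 then a1 c else 0) * x (fst c) (snd c))"
      unfolding e1 using f by (intro sum.mono_neutral_cong_left) auto
    moreover have "L2 x = (\<Sum>c\<in>S1 \<union> S2. (if c \<in> S2 then a2 c else 0) * x (fst c) (snd c))"
      unfolding e2 using f by (intro sum.mono_neutral_cong_left) auto
    ultimately show ?thesis by (simp add: b_def distrib_right sum.distrib)
  qed
  with f show ?thesis unfolding finite_linear_def by blast
qed

lemma finite_linear_sum:
  "finite I \<Longrightarrow> (\<And>i. i \<in> I \<Longrightarrow> finite_linear (L i)) \<Longrightarrow> finite_linear (\<lambda>x. \<Sum>i\<in>I. L i x)"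
  by (induction I rule: finite_induct) (auto intro: finite_linear_add)

lemma finite_linear_if: "finite_linear L \<Longrightarrow> finite_linear (\<lambda>x. if b then L x else 0)"
  by (cases b) auto

lemma finite_linear_dcomp: "finite_linear (\<lambda>x. dcomp x z \<alpha>)"
  by (cases z) (auto simp: dcomp_def)

lemma finite_linear_phi_deriv: "finite_linear (\<lambda>x. phi_deriv x \<eta> \<nu>)"
proof (induction \<eta> arbitrary: \<nu>)
  case (Cons z \<eta>)
  show ?case
  proof (cases \<nu>)
    case (Cons y w)
    show ?thesis unfolding Cons phi_deriv_Cons_Cons shuffle_def
      by (intro finite_linear_add finite_linear_if Cons.IH finite_linear_sum
          finite_list_pairs_length_sum finite_linear_mult_const finite_linear_dcomp)
  qed simp
qed simp

lemma finite_linear_add_scaled: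
  "finite_linear L \<Longrightarrow> L (\<lambda>\<nu> i. x \<nu> i + s * y \<nu> i) = L x + s * L y"
  by (auto simp: finite_linear_def sum.distrib sum_distrib_left algebra_simps)

lemma continuous_on_finite_linear:
  fixes L :: "('n,'a::real_normed_field) vser \<Rightarrow> 'a"
  assumes "finite_linear L" "\<And>\<nu> i. continuous_on S (\<lambda>t. f t \<nu> i)"
  shows "continuous_on S (\<lambda>t. L (f t))"
proof -
  from assms(1) obtain C a where "finite C" and "\<And>x. L x = (\<Sum>c\<in>C. a c * x (fst c) (snd c))"
    unfolding finite_linear_def by blast
  then show ?thesis by (simp, intro continuous_intros assms(2))
qed

definition lower_words :: "'n option list \<Rightarrow> 'n option list set" where
  "lower_words \<nu> = {\<eta>. length \<eta> \<le> length \<nu> \<and> weight \<eta> < weight \<nu>}"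

lemma finite_lower_words: "finite (lower_words (\<nu>::'n::finite option list))"
  unfolding lower_words_def by (rule finite_subset[OF _ finite_lists_length_le_UNIV]) auto

lemma mcomp_eq_sum: "mcomp c d \<nu> k = (\<Sum>\<eta>\<in>{\<eta>. length \<eta> \<le> length \<nu>}. c \<eta> k * phi d \<eta> \<nu>)"
proof -
  have "mcomp c d \<nu> k = infsum (\<lambda>\<eta>. c \<eta> k * phi d \<eta> \<nu>) {\<eta>. length \<eta> \<le> length \<nu>}"
    unfolding mcomp_def by (rule infsum_cong_neutral) (use phi_nonzero_imp_length_le in force)+
  also have "\<dots> = (\<Sum>\<eta>\<in>{\<eta>. length \<eta> \<le> length \<nu>}. c \<eta> k * phi d \<eta> \<nu>)"
    by (rule infsum_finite) (rule finite_lists_length_le_UNIV)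
  finally show ?thesis .
qed

lemma filterlim_of_real_at_0: "filterlim (of_real :: real \<Rightarrow> 'a::real_normed_algebra_1) (at 0) (at 0)"
proof (rule filterlim_atI)
  show "((of_real :: real \<Rightarrow> 'a) \<longlongrightarrow> 0) (at 0)"
    using tendsto_of_real[OF tendsto_ident_at[of 0 UNIV]] by simp
qed (auto simp: eventually_at_filter)

definition tangent_coeff :: "('n::finite,'a::comm_ring_1) vser \<Rightarrow> ('n,'a) vser \<Rightarrow> ('n,'a) vser" where
  "tangent_coeff c x = (\<lambda>\<nu> k. x \<nu> k + (\<Sum>\<eta>\<in>lower_words \<nu>. c \<eta> k * phi_deriv x \<eta> \<nu>))"

lemma tangent_coeff_cong:
  "(\<And>\<eta>. weight \<eta> < weight \<nu> \<Longrightarrow> c \<eta> k = c' \<eta> k) \<Longrightarrow> tangent_coeff c x \<nu> k = tangent_coeff c' x \<nu> k"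
  unfolding tangent_coeff_def lower_words_def by (auto intro!: sum.cong)

lemma tendsto_tangent_coeff:
  fixes c x :: "('n::finite,'a::real_normed_field) vser"
  shows "((\<lambda>s::real. (gmul c (\<lambda>\<nu>' j. of_real s * x \<nu>' j) \<nu> k - c \<nu> k) / of_real s)
          \<longlongrightarrow> tangent_coeff c x \<nu> k) (at 0)"
proof -
  define W where "W = {\<eta>::'n option list. length \<eta> \<le> length \<nu>}"
  have W: "finite W" unfolding W_def by (rule finite_lists_length_le_UNIV)
  define h where "h z = z * x \<nu> k + (\<Sum>\<eta>\<in>W. c \<eta> k * phi (\<lambda>\<nu> j. z * x \<nu> j) \<eta> \<nu>)" for z
  have "(h has_field_derivative (x \<nu> k + (\<Sum>\<eta>\<in>W. c \<eta> k * phi_deriv x \<eta> \<nu>))) (at 0)"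
    unfolding h_def
    by (auto intro!: derivative_eq_intros has_field_derivative_phi_deriv) (simp add: mult.commute)
  moreover have "(\<Sum>\<eta>\<in>W. c \<eta> k * phi_deriv x \<eta> \<nu>) = (\<Sum>\<eta>\<in>lower_words \<nu>. c \<eta> k * phi_deriv x \<eta> \<nu>)"
    using W by (intro sum.mono_neutral_right)
      (auto simp: W_def lower_words_def dest: phi_deriv_nonzero_imp_weight_less)
  ultimately have "((\<lambda>z. (h z - h 0) / (z - 0)) \<longlongrightarrow> tangent_coeff c x \<nu> k) (at 0)"
    by (simp add: has_field_derivative_iff tangent_coeff_def)
  from filterlim_compose[OF this filterlim_of_real_at_0]
  have "((\<lambda>s::real. (h (of_real s) - h 0) / of_real s) \<longlongrightarrow> tangent_coeff c x \<nu> k) (at 0)"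
    by (simp add: o_def)
  moreover have "h 0 = c \<nu> k"
    using W by (simp add: h_def phi_zero W_def if_distrib cong: if_cong)
  ultimately show ?thesis
    unfolding gmul_def mcomp_eq_sum by (simp add: h_def W_def)
qed

section \<open>Expressions in curves and their continuity\<close>

text \<open>Every coefficient of the evolution, and every directional derivative of it, is the value at
  \<open>t = 1\<close> of such an expression.\<close>
datatype ('n,'a) expr = Cst 'a | Plus "('n,'a) expr" "('n,'a) expr"
  | Times "('n,'a) expr" "('n,'a) expr" | Integ "('n,'a) expr" | Lin nat "('n,'a) vser \<Rightarrow> 'a"

type_synonym ('n,'a) curves = "nat \<Rightarrow> real \<Rightarrow> ('n,'a) vser"

primrec eval_expr :: "('n,'a::{real_normed_field,banach}) expr \<Rightarrow> ('n,'a) curves \<Rightarrow> real \<Rightarrow> 'a" where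
  "eval_expr (Cst a) E t = a"
| "eval_expr (Plus a b) E t = eval_expr a E t + eval_expr b E t"
| "eval_expr (Times a b) E t = eval_expr a E t * eval_expr b E t"
| "eval_expr (Integ a) E t = integral {0..t} (eval_expr a E)"
| "eval_expr (Lin j L) E t = L (E j t)"

lemma eval_expr_lambda:
  "eval_expr (Cst c) = (\<lambda>E t. c)"
  "eval_expr (Plus a b) = (\<lambda>E t. eval_expr a E t + eval_expr b E t)"
  "eval_expr (Times a b) = (\<lambda>E t. eval_expr a E t * eval_expr b E t)"
  "eval_expr (Integ a) = (\<lambda>E t. integral {0..t} (eval_expr a E))"
  "eval_expr (Lin j L) = (\<lambda>E t. L (E j t))"
  by (auto simp: fun_eq_iff)

primrec wf_expr :: "('n,'a::comm_ring_1) expr \<Rightarrow> nat \<Rightarrow> bool" where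
  "wf_expr (Cst a) m = True"
| "wf_expr (Plus a b) m = (wf_expr a m \<and> wf_expr b m)"
| "wf_expr (Times a b) m = (wf_expr a m \<and> wf_expr b m)"
| "wf_expr (Integ a) m = wf_expr a m"
| "wf_expr (Lin j L) m = (j < m \<and> finite_linear L)"

lemma wf_expr_mono: "wf_expr e m \<Longrightarrow> m \<le> m' \<Longrightarrow> wf_expr e m'"
  by (induction e) auto

lemma eval_expr_cong:
  "wf_expr e m \<Longrightarrow> (\<And>j. j < m \<Longrightarrow> E j = E' j) \<Longrightarrow> eval_expr e E = eval_expr e E'"
  by (induction e) auto

definition continuous_curves :: "('n,'a::real_normed_field) curves \<Rightarrow> bool" where
  "continuous_curves E \<longleftrightarrow> (\<forall>j \<nu> i. continuous_on {0..1} (\<lambda>t. E j t \<nu> i))"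

lemma continuous_curves_upd:
  "continuous_curves E \<Longrightarrow> (\<And>\<nu> i. continuous_on {0..1} (\<lambda>t. f t \<nu> i)) \<Longrightarrow> continuous_curves (E(p := f))"
  unfolding continuous_curves_def by auto

lemma continuous_on_eval_expr:
  "wf_expr e m \<Longrightarrow> continuous_curves E \<Longrightarrow> continuous_on {0..1} (eval_expr e E)"
proof (induction e)
  case (Integ a)
  then show ?case unfolding eval_expr_lambda
    by (intro indefinite_integral_continuous_1 integrable_continuous_interval) simp
next
  case (Lin j L)
  then show ?case unfolding eval_expr_lambda
    by (intro continuous_on_finite_linear[of L "{0..1}" "E j"]) (auto simp: continuous_curves_def)
qed (auto simp: eval_expr_lambda intro: continuous_intros)

definition curves_close ::
  "nat \<Rightarrow> ('n option list \<times> 'n) set \<Rightarrow> real \<Rightarrow> ('n,'a::real_normed_field) curves \<Rightarrow> ('n,'a) curves \<Rightarrow> bool"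
where
  "curves_close m C \<delta> E' E \<longleftrightarrow>
     (\<forall>j<m. \<forall>c\<in>C. \<forall>t\<in>{0..1}. norm (E' j t (fst c) (snd c) - E j t (fst c) (snd c)) < \<delta>)"

lemma curves_close_mono: "curves_close m C \<delta> E' E \<Longrightarrow> C' \<subseteq> C \<Longrightarrow> \<delta> \<le> \<delta>' \<Longrightarrow> curves_close m C' \<delta>' E' E"
  unfolding curves_close_def by force

text \<open>Continuity at \<open>E\<close> when curves carry the topology of uniform convergence on \<open>[0,1]\<close> of finitely
  many coefficients of \<open>E 0, \<dots>, E (m - 1)\<close>, and values the sup norm over \<open>[0,1]\<close>.\<close>
definition uniform_cont_at ::
  "nat \<Rightarrow> ('n,'a::real_normed_field) curves \<Rightarrow> (('n,'a) curves \<Rightarrow> real \<Rightarrow> 'a) \<Rightarrow> bool"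
where
  "uniform_cont_at m E F \<longleftrightarrow> (\<forall>\<epsilon>>0. \<exists>\<delta>>0. \<exists>C. finite C \<and> (\<forall>E' t. continuous_curves E' \<longrightarrow>
     curves_close m C \<delta> E' E \<longrightarrow> t \<in> {0..1} \<longrightarrow> norm (F E' t - F E t) < \<epsilon>))"

lemma uniform_cont_atD:
  assumes "uniform_cont_at m E F" "\<epsilon> > 0"
  obtains \<delta> C where "\<delta> > 0" "finite C" "\<And>E' t. continuous_curves E' \<Longrightarrow> curves_close m C \<delta> E' E \<Longrightarrow>
    t \<in> {0..1} \<Longrightarrow> norm (F E' t - F E t) < \<epsilon>"
  using assms unfolding uniform_cont_at_def by blast

lemma uniform_cont_at_const: "uniform_cont_at m E (\<lambda>E t. c)"
  unfolding uniform_cont_at_def by (auto intro: exI[of _ "{}"])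

lemma uniform_cont_at_combine:
  assumes F: "uniform_cont_at m E F" and G: "uniform_cont_at m E G"
    and H: "\<And>\<epsilon>. \<epsilon> > 0 \<Longrightarrow> \<exists>\<epsilon>F>0. \<exists>\<epsilon>G>0. \<forall>E' t. t \<in> {0..1} \<longrightarrow> norm (F E' t - F E t) < \<epsilon>F \<longrightarrow>
      norm (G E' t - G E t) < \<epsilon>G \<longrightarrow> norm (H E' t - H E t) < \<epsilon>"
  shows "uniform_cont_at m E H"
  unfolding uniform_cont_at_def
proof (intro allI impI)
  fix \<epsilon> :: real assume "\<epsilon> > 0"
  then obtain \<epsilon>F \<epsilon>G where "\<epsilon>F > 0" "\<epsilon>G > 0" and HFG: "\<And>E' t. t \<in> {0..1} \<Longrightarrow>
      norm (F E' t - F E t) < \<epsilon>F \<Longrightarrow> norm (G E' t - G E t) < \<epsilon>G \<Longrightarrow> norm (H E' t - H E t) < \<epsilon>"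
    using H by blast
  obtain \<delta>F CF where \<delta>F: "\<delta>F > 0" "finite CF" "\<And>E' t. continuous_curves E' \<Longrightarrow>
      curves_close m CF \<delta>F E' E \<Longrightarrow> t \<in> {0..1} \<Longrightarrow> norm (F E' t - F E t) < \<epsilon>F"
    using uniform_cont_atD[OF F \<open>\<epsilon>F > 0\<close>] by blast
  obtain \<delta>G CG where \<delta>G: "\<delta>G > 0" "finite CG" "\<And>E' t. continuous_curves E' \<Longrightarrow>
      curves_close m CG \<delta>G E' E \<Longrightarrow> t \<in> {0..1} \<Longrightarrow> norm (G E' t - G E t) < \<epsilon>G"
    using uniform_cont_atD[OF G \<open>\<epsilon>G > 0\<close>] by blast
  have "norm (H E' t - H E t) < \<epsilon>"
    if "continuous_curves E'" "curves_close m (CF \<union> CG) (min \<delta>F \<delta>G) E' E" "t \<in> {0..1}" for E' t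
    using that by (intro HFG \<delta>F(3) \<delta>G(3)) (auto elim: curves_close_mono)
  with \<delta>F \<delta>G show "\<exists>\<delta>>0. \<exists>C. finite C \<and> (\<forall>E' t. continuous_curves E' \<longrightarrow>
      curves_close m C \<delta> E' E \<longrightarrow> t \<in> {0..1} \<longrightarrow> norm (H E' t - H E t) < \<epsilon>)"
    by (intro exI[of _ "min \<delta>F \<delta>G"] exI[of _ "CF \<union> CG"]) auto
qed

lemma uniform_cont_at_add:
  fixes F G :: "('n,'a::real_normed_field) curves \<Rightarrow> real \<Rightarrow> 'a"
  assumes "uniform_cont_at m E F" "uniform_cont_at m E G"
  shows "uniform_cont_at m E (\<lambda>E t. F E t + G E t)"
proof (rule uniform_cont_at_combine[OF assms])
  fix \<epsilon> :: real assume "\<epsilon> > 0"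
  have "norm ((a' + b') - (a + b)) \<le> norm (a' - a) + norm (b' - b)" for a' a b' b :: 'a
    by (metis add_diff_add norm_triangle_ineq)
  then show "\<exists>\<epsilon>F>0. \<exists>\<epsilon>G>0. \<forall>E' t. t \<in> {0..1} \<longrightarrow> norm (F E' t - F E t) < \<epsilon>F \<longrightarrow>
      norm (G E' t - G E t) < \<epsilon>G \<longrightarrow> norm ((F E' t + G E' t) - (F E t + G E t)) < \<epsilon>"
    using \<open>\<epsilon> > 0\<close> by (intro exI[of _ "\<epsilon>/2"] conjI allI impI) (fastforce intro: le_less_trans)+
qed

lemma norm_mult_diff_le:
  fixes a b a' b' :: "'a::real_normed_algebra"
  shows "norm (a' * b' - a * b) \<le> norm (a' - a) * norm b' + norm a * norm (b' - b)"
proof -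
  have "a' * b' - a * b = (a' - a) * b' + a * (b' - b)" by (simp add: algebra_simps)
  then show ?thesis by (metis add_mono norm_mult_ineq norm_triangle_le)
qed

lemma uniform_cont_at_mult:
  assumes F: "uniform_cont_at m E F" and G: "uniform_cont_at m E G"
    and "bounded (F E ` {0..1})" "bounded (G E ` {0..1})"
  shows "uniform_cont_at m E (\<lambda>E t. F E t * G E t)"
proof (rule uniform_cont_at_combine[OF F G])
  obtain A where A: "A > 0" "\<And>t. t \<in> {0..1} \<Longrightarrow> norm (F E t) \<le> A"
    using assms(3) by (auto simp: bounded_pos)
  obtain B where B: "B > 0" "\<And>t. t \<in> {0..1} \<Longrightarrow> norm (G E t) \<le> B"
    using assms(4) by (auto simp: bounded_pos)
  fix \<epsilon> :: real assume "\<epsilon> > 0"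
  define \<epsilon>F where "\<epsilon>F = \<epsilon> / (2 * (B + 1))"
  define \<epsilon>G where "\<epsilon>G = min 1 (\<epsilon> / (2 * A))"
  have bound: "norm (F E' t * G E' t - F E t * G E t) < \<epsilon>"
    if t: "t \<in> {0..1}" and dF: "norm (F E' t - F E t) < \<epsilon>F" and dG: "norm (G E' t - G E t) < \<epsilon>G"
    for E' t
  proof -
    have "norm (G E' t) \<le> B + 1"
      using norm_triangle_sub[of "G E' t" "G E t"] B(2)[OF t] dG by (simp add: \<epsilon>G_def)
    then have "norm (F E' t - F E t) * norm (G E' t) \<le> norm (F E' t - F E t) * (B + 1)"
      by (simp add: mult_left_mono)
    also have "\<dots> < \<epsilon>F * (B + 1)"
      using dF B(1) by (intro mult_strict_right_mono) auto
    also have "\<dots> = \<epsilon> / 2"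
      using B(1) by (simp add: \<epsilon>F_def field_simps)
    finally have "norm (F E' t - F E t) * norm (G E' t) < \<epsilon> / 2" .
    moreover have "norm (F E t) * norm (G E' t - G E t) \<le> A * (\<epsilon> / (2 * A))"
      using A(2)[OF t] dG A(1) by (intro mult_mono) (auto simp: \<epsilon>G_def)
    ultimately show ?thesis
      using norm_mult_diff_le[of "F E' t" "G E' t" "F E t" "G E t"] A(1) by simp
  qed
  show "\<exists>\<epsilon>F>0. \<exists>\<epsilon>G>0. \<forall>E' t. t \<in> {0..1} \<longrightarrow> norm (F E' t - F E t) < \<epsilon>F \<longrightarrow>
      norm (G E' t - G E t) < \<epsilon>G \<longrightarrow> norm (F E' t * G E' t - F E t * G E t) < \<epsilon>"
    using \<open>\<epsilon> > 0\<close> A(1) B(1)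
    by (intro exI[of _ \<epsilon>F] exI[of _ \<epsilon>G] conjI allI impI bound) (auto simp: \<epsilon>F_def \<epsilon>G_def)
qed

lemma uniform_cont_at_integral:
  fixes F :: "('n,'a::{real_normed_field,banach}) curves \<Rightarrow> real \<Rightarrow> 'a"
  assumes F: "uniform_cont_at m E F" and E: "continuous_curves E"
    and cont: "\<And>E'. continuous_curves E' \<Longrightarrow> continuous_on {0..1} (F E')"
  shows "uniform_cont_at m E (\<lambda>E t. integral {0..t} (F E))"
  unfolding uniform_cont_at_def
proof (intro allI impI)
  fix \<epsilon> :: real assume "\<epsilon> > 0"
  obtain \<delta> C where \<delta>: "\<delta> > 0" "finite C" and close: "\<And>E' t. continuous_curves E' \<Longrightarrow>
      curves_close m C \<delta> E' E \<Longrightarrow> t \<in> {0..1} \<Longrightarrow> norm (F E' t - F E t) < \<epsilon> / 2"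
    using uniform_cont_atD[OF F half_gt_zero[OF \<open>\<epsilon> > 0\<close>]] by blast
  have "norm (integral {0..t} (F E') - integral {0..t} (F E)) < \<epsilon>"
    if E': "continuous_curves E'" "curves_close m C \<delta> E' E" and t: "t \<in> {0..1}" for E' t
  proof -
    have c: "continuous_on {0..t} (F E')" "continuous_on {0..t} (F E)"
      using cont[OF E'(1)] cont[OF E] t by (auto intro: continuous_on_subset)
    have "integral {0..t} (F E') - integral {0..t} (F E) = integral {0..t} (\<lambda>s. F E' s - F E s)"
      using c by (intro integral_diff[symmetric] integrable_continuous_interval)
    also have "norm \<dots> \<le> \<epsilon> / 2 * (t - 0)"
      using t close[OF E'] by (intro integral_bound continuous_intros c) (auto intro: less_imp_le)
    also have "\<dots> < \<epsilon>" using t \<open>\<epsilon> > 0\<close> by auto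
    finally show ?thesis .
  qed
  with \<delta> show "\<exists>\<delta>>0. \<exists>C. finite C \<and> (\<forall>E' t. continuous_curves E' \<longrightarrow> curves_close m C \<delta> E' E \<longrightarrow>
      t \<in> {0..1} \<longrightarrow> norm (integral {0..t} (F E') - integral {0..t} (F E)) < \<epsilon>)"
    by blast
qed

lemma uniform_cont_at_finite_linear:
  assumes "finite_linear L" "j < m"
  shows "uniform_cont_at m E (\<lambda>E t. L (E j t))"
  unfolding uniform_cont_at_def
proof (intro allI impI)
  fix \<epsilon> :: real assume "\<epsilon> > 0"
  from assms(1) obtain S c where S: "finite S" and L: "\<And>x. L x = (\<Sum>p\<in>S. c p * x (fst p) (snd p))"
    unfolding finite_linear_def by blast
  define A where "A = (\<Sum>p\<in>S. norm (c p))"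
  have "A \<ge> 0" unfolding A_def by (simp add: sum_nonneg)
  have "norm (L (E' j t) - L (E j t)) < \<epsilon>" if "curves_close m S (\<epsilon> / (A + 1)) E' E" "t \<in> {0..1}" for E' t
  proof -
    have "L (E' j t) - L (E j t) = (\<Sum>p\<in>S. c p * (E' j t (fst p) (snd p) - E j t (fst p) (snd p)))"
      unfolding L by (simp add: sum_subtractf algebra_simps)
    also have "norm \<dots> \<le> (\<Sum>p\<in>S. norm (c p) * (\<epsilon> / (A + 1)))"
    proof (intro order.trans[OF norm_sum] sum_mono)
      fix p assume "p \<in> S"
      with that assms(2) have "norm (E' j t (fst p) (snd p) - E j t (fst p) (snd p)) \<le> \<epsilon> / (A + 1)"
        unfolding curves_close_def by (auto intro: less_imp_le)
      then show "norm (c p * (E' j t (fst p) (snd p) - E j t (fst p) (snd p))) \<le> norm (c p) * (\<epsilon> / (A + 1))"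
        unfolding norm_mult by (intro mult_left_mono) auto
    qed
    also have "\<dots> = A * (\<epsilon> / (A + 1))" unfolding A_def by (rule sum_distrib_right[symmetric])
    also have "\<dots> < \<epsilon>" using \<open>A \<ge> 0\<close> \<open>\<epsilon> > 0\<close> by (simp add: field_simps)
    finally show ?thesis .
  qed
  with S \<open>A \<ge> 0\<close> \<open>\<epsilon> > 0\<close> show "\<exists>\<delta>>0. \<exists>C. finite C \<and> (\<forall>E' t. continuous_curves E' \<longrightarrow>
      curves_close m C \<delta> E' E \<longrightarrow> t \<in> {0..1} \<longrightarrow> norm (L (E' j t) - L (E j t)) < \<epsilon>)"
    by (intro exI[of _ "\<epsilon> / (A + 1)"] exI[of _ S]) auto
qed

lemma uniform_cont_at_eval_expr:
  "wf_expr e m \<Longrightarrow> continuous_curves E \<Longrightarrow> uniform_cont_at m E (eval_expr e)"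
proof (induction e)
  case (Cst c) show ?case unfolding eval_expr_lambda by (rule uniform_cont_at_const)
next
  case (Plus a b) then show ?case unfolding eval_expr_lambda by (intro uniform_cont_at_add) auto
next
  case (Times a b) then show ?case unfolding eval_expr_lambda
    by (intro uniform_cont_at_mult compact_imp_bounded compact_continuous_image continuous_on_eval_expr)
      auto
next
  case (Integ a) then show ?case unfolding eval_expr_lambda
    by (intro uniform_cont_at_integral continuous_on_eval_expr) auto
next
  case (Lin j L) then show ?case unfolding eval_expr_lambda by (intro uniform_cont_at_finite_linear) auto
qed

section \<open>Directional derivatives of expressions\<close>

primrec subst_curve0 :: "('n,'a) expr \<Rightarrow> nat \<Rightarrow> ('n,'a) expr" where
  "subst_curve0 (Cst a) p = Cst a"
| "subst_curve0 (Plus a b) p = Plus (subst_curve0 a p) (subst_curve0 b p)"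
| "subst_curve0 (Times a b) p = Times (subst_curve0 a p) (subst_curve0 b p)"
| "subst_curve0 (Integ a) p = Integ (subst_curve0 a p)"
| "subst_curve0 (Lin j L) p = Lin (if j = 0 then p else j) L"

primrec deriv_expr :: "('n,'a::zero) expr \<Rightarrow> nat \<Rightarrow> ('n,'a) expr" where
  "deriv_expr (Cst a) m = Cst 0"
| "deriv_expr (Plus a b) m = Plus (deriv_expr a m) (deriv_expr b m)"
| "deriv_expr (Times a b) m = Plus (Times (deriv_expr a m) b) (Times a (deriv_expr b m))"
| "deriv_expr (Integ a) m = Integ (deriv_expr a m)"
| "deriv_expr (Lin j L) m = (if j = 0 then Lin m L else Cst 0)"

text \<open>The exact difference quotient of \<open>e\<close> in the direction of curve \<open>m\<close>: the right factors of products
  are evaluated at the perturbed curve, which is stored as curve \<open>p\<close> (see \<open>eval_dquot_expr\<close>).\<close>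
primrec dquot_expr :: "('n,'a::zero) expr \<Rightarrow> nat \<Rightarrow> nat \<Rightarrow> ('n,'a) expr" where
  "dquot_expr (Cst a) m p = Cst 0"
| "dquot_expr (Plus a b) m p = Plus (dquot_expr a m p) (dquot_expr b m p)"
| "dquot_expr (Times a b) m p = Plus (Times (dquot_expr a m p) (subst_curve0 b p)) (Times a (dquot_expr b m p))"
| "dquot_expr (Integ a) m p = Integ (dquot_expr a m p)"
| "dquot_expr (Lin j L) m p = (if j = 0 then Lin m L else Cst 0)"

lemma eval_subst_curve0: "eval_expr (subst_curve0 e p) E = eval_expr e (E(0 := E p))"
  by (induction e) auto

lemma wf_subst_curve0: "wf_expr e m \<Longrightarrow> m < p \<Longrightarrow> wf_expr (subst_curve0 e p) (Suc p)"
  by (induction e) auto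

lemma wf_dquot_expr: "wf_expr e m \<Longrightarrow> m < p \<Longrightarrow> wf_expr (dquot_expr e m p) (Suc p)"
  by (induction e) (auto intro: wf_subst_curve0 wf_expr_mono)

lemma wf_deriv_expr: "wf_expr e m \<Longrightarrow> wf_expr (deriv_expr e m) (Suc m)"
  by (induction e) (auto intro: wf_expr_mono)

lemma eval_dquot_expr_unperturbed:
  "wf_expr e m \<Longrightarrow> m < p \<Longrightarrow> eval_expr (dquot_expr e m p) (E(p := E 0)) = eval_expr (deriv_expr e m) E"
proof (induction e)
  case (Times a b)
  then have a: "wf_expr a m" and b: "wf_expr b m" by auto
  have "eval_expr (subst_curve0 b p) (E(p := E 0)) = eval_expr b (E(p := E 0, 0 := E 0))"
    by (simp add: eval_subst_curve0)
  also have "\<dots> = eval_expr b E"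
    using Times.prems(2) by (intro eval_expr_cong[OF b]) auto
  finally show ?case
    using Times.IH(1)[OF a Times.prems(2)] Times.IH(2)[OF b Times.prems(2)]
      eval_expr_cong[OF a, of "E(p := E 0)" E] Times.prems(2)
    by (simp only: dquot_expr.simps deriv_expr.simps eval_expr_lambda) auto
qed (auto simp: eval_expr_lambda)

definition perturb :: "('n,'a::real_normed_field) curves \<Rightarrow> nat \<Rightarrow> 'a \<Rightarrow> real \<Rightarrow> ('n,'a) vser" where
  "perturb E m s = (\<lambda>t \<nu> j. E 0 t \<nu> j + s * E m t \<nu> j)"

lemma perturb_0 [simp]: "perturb E m 0 = E 0"
  by (simp add: perturb_def)

lemma continuous_on_perturb:
  "continuous_curves E \<Longrightarrow> continuous_on {0..1} (\<lambda>t. perturb E m s t \<nu> i)"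
  unfolding continuous_curves_def perturb_def by (intro continuous_intros) auto

lemma eval_dquot_expr:
  fixes E :: "('n::finite,'a::{real_normed_field,banach}) curves"
  assumes "wf_expr e m" "m < p" "continuous_curves E" "t \<in> {0..1}"
  shows "eval_expr e (E(0 := perturb E m s)) t - eval_expr e E t =
    s * eval_expr (dquot_expr e m p) (E(p := perturb E m s)) t"
  using assms
proof (induction e arbitrary: t)
  case (Times a b)
  let ?E0 = "E(0 := perturb E m s)" and ?Ep = "E(p := perturb E m s)"
  from Times.prems have wf: "wf_expr a m" "wf_expr b m" by auto
  have b: "eval_expr (subst_curve0 b p) ?Ep = eval_expr b ?E0" and a: "eval_expr a ?Ep = eval_expr a E"
    unfolding eval_subst_curve0 using Times.prems by (auto intro: eval_expr_cong[of _ m])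
  have "eval_expr a ?E0 t * eval_expr b ?E0 t - eval_expr a E t * eval_expr b E t =
      (eval_expr a ?E0 t - eval_expr a E t) * eval_expr b ?E0 t
      + eval_expr a E t * (eval_expr b ?E0 t - eval_expr b E t)"
    by (simp add: algebra_simps)
  also have "\<dots> = s * (eval_expr (dquot_expr a m p) ?Ep t * eval_expr (subst_curve0 b p) ?Ep t
      + eval_expr a ?Ep t * eval_expr (dquot_expr b m p) ?Ep t)"
    unfolding Times.IH(1)[OF wf(1) Times.prems(2-4)] Times.IH(2)[OF wf(2) Times.prems(2-4)] a b
    by (simp add: algebra_simps)
  finally show ?case by (simp only: eval_expr.simps dquot_expr.simps)
next
  case (Integ a)
  let ?E0 = "E(0 := perturb E m s)" and ?Ep = "E(p := perturb E m s)"
  have "continuous_on {0..t} (eval_expr a ?E0)" "continuous_on {0..t} (eval_expr a E)"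
    using Integ.prems
    by (auto intro!: continuous_on_eval_expr[THEN continuous_on_subset] continuous_curves_upd
        continuous_on_perturb)
  then have "integral {0..t} (eval_expr a ?E0) - integral {0..t} (eval_expr a E)
      = integral {0..t} (\<lambda>\<tau>. eval_expr a ?E0 \<tau> - eval_expr a E \<tau>)"
    by (intro integral_diff[symmetric] integrable_continuous_interval)
  also have "\<dots> = integral {0..t} (\<lambda>\<tau>. s * eval_expr (dquot_expr a m p) ?Ep \<tau>)"
    by (intro integral_cong Integ.IH) (use Integ.prems in auto)
  also have "\<dots> = s * integral {0..t} (eval_expr (dquot_expr a m p) ?Ep)"
    by simp
  finally show ?case by (simp only: eval_expr.simps dquot_expr.simps)
next
  case (Plus a b) then show ?case by (simp add: algebra_simps)
next
  case (Lin j L) then show ?case by (auto simp: finite_linear_add_scaled perturb_def)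
qed simp

lemma eventually_curves_close_perturb:
  fixes E :: "('n,'a::real_normed_field) curves"
  assumes E: "continuous_curves E" and "finite C" "\<delta> > 0"
  shows "\<forall>\<^sub>F s in at 0. curves_close n C \<delta> (E(p := perturb E m s)) (E(p := E 0))"
proof -
  have "compact (\<Union>c\<in>C. (\<lambda>t. E m t (fst c) (snd c)) ` {0..1})"
    using assms E unfolding continuous_curves_def by (intro compact_UN compact_continuous_image) auto
  then obtain B where B: "B > 0" "\<forall>c\<in>C. \<forall>t\<in>{0..1}. norm (E m t (fst c) (snd c)) \<le> B"
    by (auto dest!: compact_imp_bounded simp: bounded_pos)
  have "\<forall>\<^sub>F s in at (0::'a). norm s < \<delta> / B"
    using order_tendstoD(2)[OF tendsto_norm_zero[OF tendsto_ident_at], of "\<delta> / B"] \<open>\<delta> > 0\<close> B(1)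
    by simp
  then show ?thesis
  proof (rule eventually_mono)
    fix s :: 'a assume s: "norm s < \<delta> / B"
    have "norm (s * E m t (fst c) (snd c)) < \<delta>" if "c \<in> C" "t \<in> {0..1}" for c t
    proof -
      have "norm (s * E m t (fst c) (snd c)) \<le> norm s * B"
        unfolding norm_mult using B(2) that by (intro mult_left_mono) auto
      also have "\<dots> < \<delta>" using s B(1) by (simp add: field_simps)
      finally show ?thesis .
    qed
    then show "curves_close n C \<delta> (E(p := perturb E m s)) (E(p := E 0))"
      using \<open>\<delta> > 0\<close> by (auto simp: curves_close_def perturb_def)
  qed
qed

text \<open>The difference quotient is itself an expression, so it is continuous in the perturbation.\<close>
lemma tendsto_eval_expr_deriv:
  fixes E :: "('n::finite,'a::{real_normed_field,banach}) curves"
  assumes e: "wf_expr e m" and E: "continuous_curves E"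
  shows "((\<lambda>s. (eval_expr e (E(0 := perturb E m s)) 1 - eval_expr e E 1) / s)
    \<longlongrightarrow> eval_expr (deriv_expr e m) E 1) (at 0)"
proof -
  define p where "p = Suc m"
  define G where "G s = eval_expr (dquot_expr e m p) (E(p := perturb E m s)) 1" for s
  have uc: "uniform_cont_at (Suc p) (E(p := E 0)) (eval_expr (dquot_expr e m p))"
    using e E unfolding p_def
    by (intro uniform_cont_at_eval_expr wf_dquot_expr continuous_curves_upd)
      (auto simp: continuous_curves_def)
  have "(G \<longlongrightarrow> G 0) (at 0)"
  proof (rule tendstoI)
    fix \<epsilon> :: real assume "\<epsilon> > 0"
    then obtain \<delta> C where "\<delta> > 0" "finite C" and close: "\<And>E' t. continuous_curves E' \<Longrightarrow>
        curves_close (Suc p) C \<delta> E' (E(p := E 0)) \<Longrightarrow> t \<in> {0..1} \<Longrightarrow>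
        norm (eval_expr (dquot_expr e m p) E' t - eval_expr (dquot_expr e m p) (E(p := E 0)) t) < \<epsilon>"
      using uniform_cont_atD[OF uc] by blast
    from eventually_curves_close_perturb[OF E \<open>finite C\<close> \<open>\<delta> > 0\<close>, where n = "Suc p" and p = p and m = m]
    show "\<forall>\<^sub>F s in at 0. dist (G s) (G 0) < \<epsilon>"
    proof eventually_elim
      case (elim s)
      have "continuous_curves (E(p := perturb E m s))"
        using E by (intro continuous_curves_upd continuous_on_perturb)
      from close[OF this elim, of 1] show ?case by (simp add: G_def dist_norm)
    qed
  qed
  moreover have "G 0 = eval_expr (deriv_expr e m) E 1"
    using eval_dquot_expr_unperturbed[OF e] by (simp add: G_def p_def)
  ultimately have "(G \<longlongrightarrow> eval_expr (deriv_expr e m) E 1) (at 0)"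
    by simp
  moreover have "\<forall>\<^sub>F s in at 0. G s = (eval_expr e (E(0 := perturb E m s)) 1 - eval_expr e E 1) / s"
    using eval_dquot_expr[OF e _ E, of p 1] by (auto simp: G_def p_def eventually_at_filter)
  ultimately show ?thesis by (rule Lim_transform_eventually)
qed

section \<open>Existence and uniqueness of the evolution\<close>

primrec sum_expr :: "('b \<Rightarrow> ('n,'a::zero) expr) \<Rightarrow> 'b list \<Rightarrow> ('n,'a) expr" where
  "sum_expr f [] = Cst 0"
| "sum_expr f (x # xs) = Plus (f x) (sum_expr f xs)"

lemma sum_expr_cong [fundef_cong]:
  "xs = ys \<Longrightarrow> (\<And>x. x \<in> set ys \<Longrightarrow> f x = g x) \<Longrightarrow> sum_expr f xs = sum_expr g ys"
  by (induction xs arbitrary: ys) auto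

lemma eval_sum_expr:
  "distinct xs \<Longrightarrow> eval_expr (sum_expr f xs) E t = (\<Sum>x\<in>set xs. eval_expr (f x) E t)"
  by (induction xs) auto

lemma wf_sum_expr: "(\<And>x. x \<in> set xs \<Longrightarrow> wf_expr (f x) m) \<Longrightarrow> wf_expr (sum_expr f xs) m"
  by (induction xs) auto

definition lower_words_list :: "'n::finite option list \<Rightarrow> 'n option list list" where
  "lower_words_list \<nu> = (SOME xs. set xs = lower_words \<nu> \<and> distinct xs)"

lemma set_lower_words_list: "set (lower_words_list \<nu>) = lower_words \<nu>"
  and distinct_lower_words_list: "distinct (lower_words_list \<nu>)"
  using someI_ex[OF finite_distinct_list[OF finite_lower_words[of \<nu>]]]
  unfolding lower_words_list_def by auto

text \<open>The integral form of \<open>\<gamma>' = T\<lambda>\<^sub>\<gamma>(u)\<close> at the coefficient \<open>(\<nu>, k)\<close>, with \<open>u\<close> as curve \<open>0\<close>.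
  The recursion terminates because the tangent map is triangular with respect to the weight.\<close>
function evol_expr :: "'n::finite option list \<Rightarrow> 'n \<Rightarrow> ('n,'a::comm_ring_1) expr" where
  "evol_expr \<nu> k = Integ (Plus (Lin 0 (\<lambda>x. x \<nu> k))
     (sum_expr (\<lambda>\<eta>. Times (evol_expr \<eta> k) (Lin 0 (\<lambda>x. phi_deriv x \<eta> \<nu>))) (lower_words_list \<nu>)))"
  by pat_completeness auto
termination
  by (relation "Wellfounded.measure (\<lambda>(\<nu>, k). weight \<nu>)") (auto simp: set_lower_words_list lower_words_def)

declare evol_expr.simps [simp del]

lemma wf_evol_expr: "wf_expr (evol_expr \<nu> k :: ('n::finite,'a::comm_ring_1) expr) 1"
proof (induction "weight \<nu>" arbitrary: \<nu> rule: less_induct)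
  case less
  then show ?case
    by (subst evol_expr.simps)
      (auto intro!: wf_sum_expr finite_linear_phi_deriv simp: set_lower_words_list lower_words_def)
qed

lemma eval_evol_expr:
  "eval_expr (evol_expr \<nu> k) E t =
    integral {0..t} (\<lambda>s. tangent_coeff (\<lambda>\<eta> k. eval_expr (evol_expr \<eta> k) E s) (E 0 s) \<nu> k)"
  by (subst evol_expr.simps) (simp add: eval_expr_lambda eval_sum_expr set_lower_words_list distinct_lower_words_list tangent_coeff_def)

lemma tendsto_fun_iff: "(f \<longlongrightarrow> l) F \<longleftrightarrow> (\<forall>i. ((\<lambda>x. f x i) \<longlongrightarrow> l i) F)"
proof -
  have "(f \<longlongrightarrow> l) F \<longleftrightarrow> limitin (product_topology (\<lambda>i. euclidean) UNIV) f l F"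
    by (simp add: euclidean_product_topology)
  then show ?thesis
    by (simp add: limitin_componentwise)
qed

lemma has_vector_derivative_iff_quotient:
  fixes f :: "real \<Rightarrow> 'a::real_normed_field"
  shows "(f has_vector_derivative D) (at x within S) \<longleftrightarrow>
    ((\<lambda>y. (f y - f x) / of_real (y - x)) \<longlongrightarrow> D) (at x within S)"
proof -
  have "norm ((f y - f x) / of_real (y - x) - D) = norm (f y - f x - (y - x) *\<^sub>R D) / norm (y - x)"
    if "y \<noteq> x" for y
  proof -
    have "(f y - f x) / of_real (y - x) - D = (f y - f x - (y - x) *\<^sub>R D) / of_real (y - x)"
      using that by (simp add: field_simps scaleR_conv_of_real)
    then show ?thesis by (simp add: norm_divide del: of_real_diff)
  qed
  then have "\<forall>\<^sub>F y in at x within S. norm (f y - f x - (y - x) *\<^sub>R D) / norm (y - x)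
      = norm ((f y - f x) / of_real (y - x) - D)"
    by (auto simp: eventually_at_filter)
  then have "((\<lambda>y. norm (f y - f x - (y - x) *\<^sub>R D) / norm (y - x)) \<longlongrightarrow> 0) (at x within S) \<longleftrightarrow>
      ((\<lambda>y. norm ((f y - f x) / of_real (y - x) - D)) \<longlongrightarrow> 0) (at x within S)"
    by (rule tendsto_cong)
  then show ?thesis
    unfolding has_vector_derivative_def has_derivative_iff_norm
    by (simp add: bounded_linear_scaleR_left tendsto_norm_zero_iff Lim_null[symmetric])
qed

lemma C0set_coeff_continuous: "u \<in> C0set \<Longrightarrow> continuous_on {0..1} (\<lambda>t. u t \<nu> i)"
  unfolding C0set_def by (auto intro: continuous_on_product_then_coordinatewise)

definition evol_curve :: "(real \<Rightarrow> ('n::finite,'a::{real_normed_field,banach}) vser) \<Rightarrow> real \<Rightarrow> ('n,'a) vser"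
  where "evol_curve u t = (\<lambda>\<nu> k. eval_expr (evol_expr \<nu> k) (\<lambda>_. u) t)"

lemma evol_curve_integral_eq:
  "evol_curve u t \<nu> k = integral {0..t} (\<lambda>s. tangent_coeff (evol_curve u s) (u s) \<nu> k)"
  unfolding evol_curve_def by (rule eval_evol_expr)

lemma continuous_on_tangent_coeff_evol_curve:
  assumes "u \<in> C0set"
  shows "continuous_on {0..1} (\<lambda>s. tangent_coeff (evol_curve u s) (u s) \<nu> k)"
proof -
  have "continuous_curves (\<lambda>_. u)"
    using assms by (simp add: continuous_curves_def C0set_coeff_continuous)
  then show ?thesis
    unfolding tangent_coeff_def evol_curve_def using assms
    by (intro continuous_intros continuous_on_eval_expr[OF wf_evol_expr]
        continuous_on_finite_linear[OF finite_linear_phi_deriv] C0set_coeff_continuous)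
qed

lemma solves_evol_evol_curve:
  assumes u: "u \<in> C0set"
  shows "solves_evol u (evol_curve u)"
proof -
  define \<gamma>' where "\<gamma>' t = tangent_coeff (evol_curve u t) (u t)" for t
  have cont: "continuous_on {0..1} (\<lambda>t. \<gamma>' t \<nu> k)" for \<nu> k
    unfolding \<gamma>'_def by (rule continuous_on_tangent_coeff_evol_curve[OF u])
  have "C1_on01 (evol_curve u) \<gamma>'"
    unfolding C1_on01_def
  proof (intro conjI ballI)
    show "continuous_on {0..1} \<gamma>'"
      by (intro continuous_on_coordinatewise_then_product cont)
    fix t :: real assume t: "t \<in> {0..1}"
    show "((\<lambda>s \<nu> k. (evol_curve u s \<nu> k - evol_curve u t \<nu> k) / of_real (s - t)) \<longlongrightarrow> \<gamma>' t)
        (at t within {0..1})"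
      unfolding tendsto_fun_iff
    proof (intro allI)
      fix \<nu> k
      have "((\<lambda>s. integral {0..s} (\<lambda>r. \<gamma>' r \<nu> k)) has_vector_derivative \<gamma>' t \<nu> k) (at t within {0..1})"
        by (rule integral_has_vector_derivative[OF cont t])
      then show "((\<lambda>s. (evol_curve u s \<nu> k - evol_curve u t \<nu> k) / of_real (s - t)) \<longlongrightarrow> \<gamma>' t \<nu> k)
          (at t within {0..1})"
        unfolding \<gamma>'_def evol_curve_integral_eq[symmetric] has_vector_derivative_iff_quotient .
    qed
  qed
  moreover have "((\<lambda>s::real. (\<lambda>\<nu> k. (gmul (evol_curve u t) (\<lambda>\<nu>' j. of_real s * u t \<nu>' j) \<nu> k
      - evol_curve u t \<nu> k) / of_real s)) \<longlongrightarrow> \<gamma>' t) (at 0)" for t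
    unfolding tendsto_fun_iff \<gamma>'_def by (intro allI tendsto_tangent_coeff)
  moreover have "evol_curve u 0 = (\<lambda>\<nu> k. 0)"
    by (simp add: fun_eq_iff evol_curve_integral_eq[of u 0])
  ultimately show ?thesis
    unfolding solves_evol_def by blast
qed

lemma solves_evol_integral_eq:
  fixes \<gamma> :: "real \<Rightarrow> ('n::finite,'a::{real_normed_field,banach}) vser"
  assumes "solves_evol u \<gamma>" "t \<in> {0..1}"
  shows "\<gamma> t \<nu> k = integral {0..t} (\<lambda>s. tangent_coeff (\<gamma> s) (u s) \<nu> k)"
proof -
  from assms(1) obtain \<gamma>' where \<gamma>0: "\<gamma> 0 = (\<lambda>\<nu> k. 0)" and C1: "C1_on01 \<gamma> \<gamma>'"
    and tangent: "\<And>t. t \<in> {0..1} \<Longrightarrow> ((\<lambda>s::real. (\<lambda>\<nu> k. (gmul (\<gamma> t) (\<lambda>\<nu>' j. of_real s * u t \<nu>' j) \<nu> k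
      - \<gamma> t \<nu> k) / of_real s)) \<longlongrightarrow> \<gamma>' t) (at 0)"
    unfolding solves_evol_def by blast
  have deriv: "((\<lambda>r. \<gamma> r \<nu> k) has_vector_derivative tangent_coeff (\<gamma> s) (u s) \<nu> k)
      (at s within {0..1})" if s: "s \<in> {0..1}" for s
  proof -
    have "\<gamma>' s \<nu> k = tangent_coeff (\<gamma> s) (u s) \<nu> k"
      using tangent[OF s] unfolding tendsto_fun_iff
      by (intro tendsto_unique[OF _ _ tendsto_tangent_coeff]) auto
    moreover from C1 s have "((\<lambda>r. (\<gamma> r \<nu> k - \<gamma> s \<nu> k) / of_real (r - s)) \<longlongrightarrow> \<gamma>' s \<nu> k)
        (at s within {0..1})"
      unfolding C1_on01_def tendsto_fun_iff by blast
    ultimately show ?thesis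
      unfolding has_vector_derivative_iff_quotient by simp
  qed
  then have "((\<lambda>s. tangent_coeff (\<gamma> s) (u s) \<nu> k) has_integral \<gamma> t \<nu> k - \<gamma> 0 \<nu> k) {0..t}"
    using assms(2)
    by (intro fundamental_theorem_of_calculus[where f = "\<lambda>r. \<gamma> r \<nu> k"])
      (auto intro: has_vector_derivative_within_subset[OF deriv])
  with \<gamma>0 show ?thesis
    by (simp add: integral_unique)
qed

lemma tangent_integral_eq_unique:
  fixes \<gamma> \<gamma>2 u :: "real \<Rightarrow> ('n::finite,'a::{real_normed_field,banach}) vser"
  assumes \<gamma>: "\<And>t \<nu> k. t \<in> {0..1} \<Longrightarrow> \<gamma> t \<nu> k = integral {0..t} (\<lambda>s. tangent_coeff (\<gamma> s) (u s) \<nu> k)"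
    and \<gamma>2: "\<And>t \<nu> k. t \<in> {0..1} \<Longrightarrow> \<gamma>2 t \<nu> k = integral {0..t} (\<lambda>s. tangent_coeff (\<gamma>2 s) (u s) \<nu> k)"
    and "t \<in> {0..1}"
  shows "\<gamma> t \<nu> k = \<gamma>2 t \<nu> k"
  using assms(3)
proof (induction "weight \<nu>" arbitrary: \<nu> t rule: less_induct)
  case less
  have "tangent_coeff (\<gamma> s) (u s) \<nu> k = tangent_coeff (\<gamma>2 s) (u s) \<nu> k" if "s \<in> {0..t}" for s
    by (intro tangent_coeff_cong less.hyps) (use that less.prems in auto)
  then have "integral {0..t} (\<lambda>s. tangent_coeff (\<gamma> s) (u s) \<nu> k)
      = integral {0..t} (\<lambda>s. tangent_coeff (\<gamma>2 s) (u s) \<nu> k)"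
    by (rule integral_cong)
  with \<gamma>[OF less.prems] \<gamma>2[OF less.prems] show ?case
    by simp
qed

section \<open>Compact-open neighbourhoods\<close>

lemma topspace_CO_top: "topspace (CO_top :: (real \<Rightarrow> ('n,'a::real_normed_field) vser) topology) = C0set"
proof -
  have "(UNIV :: (real \<Rightarrow> ('n,'a) vser) set)
      \<in> {{u. u ` K \<subseteq> U} | K U. compact K \<and> K \<subseteq> {0..1} \<and> open U}"
    by (rule CollectI, rule exI[of _ "{}"], rule exI[of _ UNIV]) auto
  then have "\<Union>{{u. u ` K \<subseteq> U} | K U. compact K \<and> K \<subseteq> {0..1} \<and> open U}
      = (UNIV :: (real \<Rightarrow> ('n,'a) vser) set)"
    by blast
  then show ?thesis
    unfolding CO_top_def by simp
qed

lemma openin_CO_top_compact_open: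
  assumes "compact K" "K \<subseteq> {0..1}" "open U"
  shows "openin CO_top ({u. u ` K \<subseteq> U} \<inter> C0set)"
  unfolding CO_top_def openin_subtopology openin_topology_generated_by_iff
  by (intro exI[of _ "{u. u ` K \<subseteq> U}"] conjI generate_topology_on.Basis) (use assms in auto)

lemma open_coeff_ball: "open {x :: ('n,'a::real_normed_field) vser. dist (x \<nu> i) a < r}"
proof -
  have "continuous_on UNIV (\<lambda>x :: ('n,'a) vser. x \<nu> i)"
    by (rule continuous_on_product_then_coordinatewise) simp
  show ?thesis
    by (rule open_Collect_less) (intro continuous_intros \<open>continuous_on UNIV _\<close>)+
qed

lemma CO_top_coeff_nbhd:
  fixes w :: "real \<Rightarrow> ('n,'a::real_normed_field) vser"
  assumes w: "w \<in> C0set" and "\<delta> > 0"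
  obtains W where "openin CO_top W" "w \<in> W"
    "\<And>w' t. w' \<in> W \<Longrightarrow> t \<in> {0..1} \<Longrightarrow> norm (w' t \<nu> i - w t \<nu> i) < \<delta>"
proof -
  define f where "f t = w t \<nu> i" for t
  have "uniformly_continuous_on {0..1} f"
    unfolding f_def by (intro compact_uniformly_continuous C0set_coeff_continuous[OF w]) auto
  then obtain \<eta> where "\<eta> > 0"
    and \<eta>: "\<And>s t. s \<in> {0..1} \<Longrightarrow> t \<in> {0..1} \<Longrightarrow> dist t s < \<eta> \<Longrightarrow> dist (f t) (f s) < \<delta> / 2"
    unfolding uniformly_continuous_on_def using \<open>\<delta> > 0\<close> by (metis half_gt_zero)
  have "{0..1::real} \<subseteq> (\<Union>s\<in>{0..1}. ball s (\<eta> / 2))" using \<open>\<eta> > 0\<close> by force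
  then obtain F where F: "F \<subseteq> {0..1}" "finite F" "{0..1::real} \<subseteq> (\<Union>s\<in>F. ball s (\<eta> / 2))"
    using compactE_image[of "{0..1::real}" "{0..1}" "\<lambda>s. ball s (\<eta> / 2)"] by (metis compact_Icc open_ball)
  define K where "K s = cball s (\<eta> / 2) \<inter> {0..1}" for s :: real
  define U where "U s = {x :: ('n,'a) vser. dist (x \<nu> i) (f s) < \<delta> / 2}" for s
  define W where "W = (\<Inter>s\<in>F. {u. u ` K s \<subseteq> U s} \<inter> C0set)"
  show thesis
  proof
    show "openin CO_top W"
      unfolding W_def K_def U_def using F
      by (intro openin_INT2 openin_CO_top_compact_open open_coeff_ball) auto
    have near: "dist (f t) (f s) < \<delta> / 2" if "s \<in> F" "t \<in> K s" for s t
      using that F(1) \<open>\<eta> > 0\<close> by (intro \<eta>) (auto simp: K_def dist_commute)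
    then show "w \<in> W"
      using w by (auto simp: W_def U_def f_def)
    fix w' and t :: real assume w': "w' \<in> W" and t: "t \<in> {0..1}"
    then obtain s where s: "s \<in> F" "t \<in> ball s (\<eta> / 2)" using F(3) by blast
    then have "t \<in> K s" using t by (auto simp: K_def)
    moreover from w' s(1) have "w' ` K s \<subseteq> U s" unfolding W_def by blast
    ultimately have "dist (w' t \<nu> i) (f s) < \<delta> / 2" "dist (f t) (f s) < \<delta> / 2"
      using near[OF s(1)] by (auto simp: U_def)
    then show "norm (w' t \<nu> i - w t \<nu> i) < \<delta>"
      using dist_triangle2[of "w' t \<nu> i" "f t" "f s"] by (simp add: dist_norm f_def)
  qed
qed

lemma CO_top_coeffs_nbhd:
  fixes w :: "real \<Rightarrow> ('n,'a::real_normed_field) vser"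
  assumes w: "w \<in> C0set" and "\<delta> > 0" and "finite C"
  shows "\<exists>W. openin CO_top W \<and> w \<in> W \<and>
    (\<forall>w'\<in>W. \<forall>c\<in>C. \<forall>t\<in>{0..1}. norm (w' t (fst c) (snd c) - w t (fst c) (snd c)) < \<delta>)"
  using \<open>finite C\<close>
proof (induction C rule: finite_induct)
  case empty
  show ?case using w by (intro exI[of _ C0set]) (auto simp: topspace_CO_top[symmetric])
next
  case (insert c C)
  then obtain W1 where "openin CO_top W1" "w \<in> W1"
    "\<forall>w'\<in>W1. \<forall>c\<in>C. \<forall>t\<in>{0..1}. norm (w' t (fst c) (snd c) - w t (fst c) (snd c)) < \<delta>"
    by blast
  moreover obtain W2 where "openin CO_top W2" "w \<in> W2"
    "\<And>w' t. w' \<in> W2 \<Longrightarrow> t \<in> {0..1} \<Longrightarrow> norm (w' t (fst c) (snd c) - w t (fst c) (snd c)) < \<delta>"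
    using CO_top_coeff_nbhd[OF w \<open>\<delta> > 0\<close>] by blast
  ultimately show ?case by (intro exI[of _ "W1 \<inter> W2"]) auto
qed

definition curve_env ::
  "(real \<Rightarrow> ('n,'a::real_normed_field) vser) \<Rightarrow> (nat \<Rightarrow> real \<Rightarrow> ('n,'a) vser) \<Rightarrow> nat \<Rightarrow> ('n,'a) curves"
where "curve_env u vs k = (\<lambda>j. if j = 0 then u else if j \<le> k then vs (j - 1) else (\<lambda>t \<nu> i. 0))"

lemma continuous_curves_curve_env:
  "u \<in> C0set \<Longrightarrow> (\<And>j. j < k \<Longrightarrow> vs j \<in> C0set) \<Longrightarrow> continuous_curves (curve_env u vs k)"
  unfolding continuous_curves_def curve_env_def by (auto intro: C0set_coeff_continuous)

abbreviation CO_prod_top ::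
  "nat \<Rightarrow> ((real \<Rightarrow> ('n,'a::real_normed_field) vser) \<times> (nat \<Rightarrow> real \<Rightarrow> ('n,'a) vser)) topology"
where "CO_prod_top k \<equiv> prod_topology CO_top (product_topology (\<lambda>_. CO_top) {..<k})"

lemma topspace_CO_prod_top:
  "(u, vs) \<in> topspace (CO_prod_top k) \<longleftrightarrow> u \<in> C0set \<and> vs \<in> PiE {..<k} (\<lambda>_. C0set)"
  by (simp add: topspace_CO_top)

lemma curves_close_curve_env:
  assumes "\<And>c t. c \<in> C \<Longrightarrow> t \<in> {0..1} \<Longrightarrow> norm (u' t (fst c) (snd c) - u t (fst c) (snd c)) < \<delta>"
    and "\<And>j c t. j < k \<Longrightarrow> c \<in> C \<Longrightarrow> t \<in> {0..1} \<Longrightarrow>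
      norm (vs' j t (fst c) (snd c) - vs j t (fst c) (snd c)) < \<delta>"
  shows "curves_close (Suc k) C \<delta> (curve_env u' vs' k) (curve_env u vs k)"
  unfolding curves_close_def
proof (intro allI impI ballI)
  fix j c and t :: real assume "j < Suc k" "c \<in> C" "t \<in> {0..1}"
  then show "norm (curve_env u' vs' k j t (fst c) (snd c) - curve_env u vs k j t (fst c) (snd c)) < \<delta>"
    using assms(1) assms(2)[of "j - 1"] by (cases "j = 0") (auto simp: curve_env_def)
qed

lemma CO_prod_top_nbhd_curves_close:
  fixes u :: "real \<Rightarrow> ('n,'a::real_normed_field) vser"
  assumes p: "(u, vs) \<in> topspace (CO_prod_top k)" and "\<delta> > 0" "finite C"
  obtains T where "openin (CO_prod_top k) T" "(u, vs) \<in> T"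
    "\<And>u' vs'. (u', vs') \<in> T \<Longrightarrow> curves_close (Suc k) C \<delta> (curve_env u' vs' k) (curve_env u vs k)"
proof -
  from p have u: "u \<in> C0set" and vs: "vs \<in> PiE {..<k} (\<lambda>_. C0set)"
    unfolding topspace_CO_prod_top by blast+
  have "\<forall>w \<in> C0set :: (real \<Rightarrow> ('n,'a) vser) set. \<exists>W. openin CO_top W \<and> w \<in> W \<and>
      (\<forall>w'\<in>W. \<forall>c\<in>C. \<forall>t\<in>{0..1}. norm (w' t (fst c) (snd c) - w t (fst c) (snd c)) < \<delta>)"
    by (intro ballI CO_top_coeffs_nbhd \<open>\<delta> > 0\<close> \<open>finite C\<close>)
  from bchoice[OF this] obtain W :: "(real \<Rightarrow> ('n,'a) vser) \<Rightarrow> _" where W: "\<forall>w\<in>C0set. openin CO_top (W w) \<and> w \<in> W w \<and>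
      (\<forall>w'\<in>W w. \<forall>c\<in>C. \<forall>t\<in>{0..1}. norm (w' t (fst c) (snd c) - w t (fst c) (snd c)) < \<delta>)" ..
  then have W_open: "\<And>w. w \<in> C0set \<Longrightarrow> openin CO_top (W w)"
    and W_mem: "\<And>w. w \<in> C0set \<Longrightarrow> w \<in> W w"
    and W_close: "\<And>w w' c t. w \<in> C0set \<Longrightarrow> w' \<in> W w \<Longrightarrow> c \<in> C \<Longrightarrow> t \<in> {0..1} \<Longrightarrow>
      norm (w' t (fst c) (snd c) - w t (fst c) (snd c)) < \<delta>"
    by auto
  show thesis
  proof
    show "openin (CO_prod_top k) (W u \<times> PiE {..<k} (\<lambda>j. W (vs j)))"
      unfolding openin_prod_Times_iff
    proof (intro disjI2 conjI)
      show "openin CO_top (W u)" using W_open u .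
      have "\<forall>j\<in>{..<k}. openin CO_top (W (vs j))"
        using W_open PiE_mem[OF vs] by blast
      then show "openin (product_topology (\<lambda>_. CO_top) {..<k}) (PiE {..<k} (\<lambda>j. W (vs j)))"
        by (simp add: openin_PiE)
    qed
    have "vs \<in> PiE {..<k} (\<lambda>j. W (vs j))"
    proof (rule PiE_I)
      show "vs j \<in> W (vs j)" if "j \<in> {..<k}" for j using W_mem PiE_mem[OF vs that] .
      show "vs j = undefined" if "j \<notin> {..<k}" for j using PiE_arb[OF vs that] .
    qed
    with W_mem u show "(u, vs) \<in> W u \<times> PiE {..<k} (\<lambda>j. W (vs j))"
      by blast
    fix u' vs' assume "(u', vs') \<in> W u \<times> PiE {..<k} (\<lambda>j. W (vs j))"
    then have u': "u' \<in> W u" and vs': "vs' \<in> PiE {..<k} (\<lambda>j. W (vs j))"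
      by simp_all
    show "curves_close (Suc k) C \<delta> (curve_env u' vs' k) (curve_env u vs k)"
    proof (rule curves_close_curve_env)
      show "norm (u' t (fst c) (snd c) - u t (fst c) (snd c)) < \<delta>" if "c \<in> C" "t \<in> {0..1}" for c t
        using W_close[OF u u' that] .
      show "norm (vs' j t (fst c) (snd c) - vs j t (fst c) (snd c)) < \<delta>"
        if "j < k" "c \<in> C" "t \<in> {0..1}" for j c t
      proof -
        from that(1) have "j \<in> {..<k}" by simp
        from W_close[OF PiE_mem[OF vs this] PiE_mem[OF vs' this] that(2,3)] show ?thesis .
      qed
    qed
  qed
qed

lemma continuous_map_eval_curve_env:
  fixes e :: "('n::finite,'a::{real_normed_field,banach}) expr"
  assumes e: "wf_expr e (Suc k)"
  shows "continuous_map (CO_prod_top k) euclidean (\<lambda>p. eval_expr e (curve_env (fst p) (snd p) k) 1)"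
  unfolding Met_TC.continuous_map_to_metric[simplified]
proof (intro ballI allI impI)
  fix p :: "(real \<Rightarrow> ('n,'a) vser) \<times> (nat \<Rightarrow> real \<Rightarrow> ('n,'a) vser)" and \<epsilon> :: real
  assume p: "p \<in> topspace (CO_prod_top k)" and "\<epsilon> > 0"
  have cont: "continuous_curves (curve_env u vs k)" if "(u, vs) \<in> topspace (CO_prod_top k)" for u vs
  proof (rule continuous_curves_curve_env)
    from that have u: "u \<in> C0set" and vs: "vs \<in> PiE {..<k} (\<lambda>_. C0set)"
      unfolding topspace_CO_prod_top by blast+
    show "u \<in> C0set" by (rule u)
    show "vs j \<in> C0set" if "j < k" for j using PiE_mem[OF vs] that by simp
  qed
  obtain u vs where puv: "p = (u, vs)" by fastforce
  with p cont have E: "continuous_curves (curve_env u vs k)" by simp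
  obtain \<delta> C where "\<delta> > 0" "finite C" and close: "\<And>E' t. continuous_curves E' \<Longrightarrow>
      curves_close (Suc k) C \<delta> E' (curve_env u vs k) \<Longrightarrow> t \<in> {0..1} \<Longrightarrow>
      norm (eval_expr e E' t - eval_expr e (curve_env u vs k) t) < \<epsilon>"
    using uniform_cont_atD[OF uniform_cont_at_eval_expr[OF e E] \<open>\<epsilon> > 0\<close>] by blast
  obtain T where T: "openin (CO_prod_top k) T" "(u, vs) \<in> T" and
    near: "\<And>u' vs'. (u', vs') \<in> T \<Longrightarrow> curves_close (Suc k) C \<delta> (curve_env u' vs' k) (curve_env u vs k)"
    using CO_prod_top_nbhd_curves_close[OF p[unfolded puv] \<open>\<delta> > 0\<close> \<open>finite C\<close>] by blast
  have "dist (eval_expr e (curve_env u vs k) 1) (eval_expr e (curve_env u' vs' k) 1) < \<epsilon>"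
    if "(u', vs') \<in> T" for u' vs'
    using close[OF cont near[OF that], of 1] openin_subset[OF T(1)] that
    by (auto simp: dist_norm norm_minus_commute)
  with T show "\<exists>U. openin (CO_prod_top k) U \<and> p \<in> U \<and> (\<forall>y\<in>U.
      dist (eval_expr e (curve_env (fst p) (snd p) k) 1) (eval_expr e (curve_env (fst y) (snd y) k) 1) < \<epsilon>)"
    unfolding puv by (intro exI[of _ T]) auto
qed

section \<open>Smoothness of the evolution map\<close>

primrec iter_deriv_expr :: "nat \<Rightarrow> ('n,'a::zero) expr \<Rightarrow> ('n,'a) expr" where
  "iter_deriv_expr 0 e = e"
| "iter_deriv_expr (Suc k) e = deriv_expr (iter_deriv_expr k e) (Suc k)"

lemma wf_iter_deriv_expr: "wf_expr e 1 \<Longrightarrow> wf_expr (iter_deriv_expr k e) (Suc k)"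
  by (induction k) (auto intro: wf_deriv_expr)

text \<open>\<open>evol_deriv k u vs\<close> is \<open>d\<^sup>k evol(u; vs 0, \<dots>, vs (k - 1))\<close>.\<close>
definition evol_deriv :: "nat \<Rightarrow> (real \<Rightarrow> ('n::finite,'a::{real_normed_field,banach}) vser)
    \<Rightarrow> (nat \<Rightarrow> real \<Rightarrow> ('n,'a) vser) \<Rightarrow> ('n,'a) vser"
  where "evol_deriv k u vs = (\<lambda>\<nu> i. eval_expr (iter_deriv_expr k (evol_expr \<nu> i)) (curve_env u vs k) 1)"

lemma continuous_map_euclidean_fun:
  "(\<And>i. continuous_map X euclidean (\<lambda>x. f x i)) \<Longrightarrow> continuous_map X euclidean f"
  by (subst euclidean_product_topology[symmetric]) (simp add: continuous_map_componentwise_UNIV)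

lemma continuous_map_evol_deriv:
  "continuous_map (CO_prod_top k) euclidean
     (\<lambda>(u, vs). evol_deriv k u vs :: ('n::finite,'a::{real_normed_field,banach}) vser)"
  unfolding split_def evol_deriv_def
  by (intro continuous_map_euclidean_fun continuous_map_eval_curve_env wf_iter_deriv_expr wf_evol_expr)

lemma tendsto_evol_deriv:
  fixes u v :: "real \<Rightarrow> ('n::finite,'a::{real_normed_field,banach}) vser"
  assumes u: "u \<in> C0set" and vs: "vs \<in> PiE {..<k} (\<lambda>_. C0set)" and v: "v \<in> C0set"
  shows "((\<lambda>s::'a. (\<lambda>\<nu> i. (evol_deriv k (\<lambda>t \<nu>' j. u t \<nu>' j + s * v t \<nu>' j) vs \<nu> i
      - evol_deriv k u vs \<nu> i) / s)) \<longlongrightarrow> evol_deriv (Suc k) u (vs(k := v))) (at 0)"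
  unfolding tendsto_fun_iff
proof (intro allI)
  fix \<nu> i
  define e where "e = iter_deriv_expr k (evol_expr \<nu> i :: ('n,'a) expr)"
  have e: "wf_expr e (Suc k)"
    unfolding e_def by (rule wf_iter_deriv_expr[OF wf_evol_expr])
  define E where "E = curve_env u (vs(k := v)) (Suc k)"
  have E: "continuous_curves E"
    unfolding E_def
  proof (rule continuous_curves_curve_env[OF u])
    show "(vs(k := v)) j \<in> C0set" if "j < Suc k" for j
      using PiE_mem[OF vs, of j] v that by (cases "j = k") auto
  qed
  have "eval_expr e (curve_env (\<lambda>t \<nu>' j. u t \<nu>' j + s * v t \<nu>' j) vs k)
      = eval_expr e (E(0 := perturb E (Suc k) s))" for s
    using e by (rule eval_expr_cong) (auto simp: E_def curve_env_def perturb_def)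
  moreover have "eval_expr e (curve_env u vs k) = eval_expr e E"
    using e by (rule eval_expr_cong) (auto simp: E_def curve_env_def)
  moreover have "evol_deriv (Suc k) u (vs(k := v)) \<nu> i = eval_expr (deriv_expr e (Suc k)) E 1"
    by (simp add: evol_deriv_def e_def E_def)
  ultimately show "((\<lambda>s. (evol_deriv k (\<lambda>t \<nu>' j. u t \<nu>' j + s * v t \<nu>' j) vs \<nu> i
      - evol_deriv k u vs \<nu> i) / s) \<longlongrightarrow> evol_deriv (Suc k) u (vs(k := v)) \<nu> i) (at 0)"
    using tendsto_eval_expr_deriv[OF e E] by (simp add: evol_deriv_def flip: e_def)
qed

lemma evol_deriv_0: "evol_deriv 0 u vs = evol_curve u 1"
proof (intro ext)
  fix \<nu> i
  have "eval_expr (evol_expr \<nu> i) (curve_env u vs 0) = eval_expr (evol_expr \<nu> i) (\<lambda>_. u)"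
    by (rule eval_expr_cong[OF wf_evol_expr]) (simp add: curve_env_def)
  then show "evol_deriv 0 u vs \<nu> i = evol_curve u 1 \<nu> i"
    by (simp add: evol_deriv_def evol_curve_def)
qed

theorem C0_regular_G_banach_field: "C0_regular_G TYPE('n::finite) TYPE('a::{real_normed_field,banach})"
  unfolding C0_regular_G_def
proof (intro conjI)
  show "\<forall>u\<in>C0set. \<exists>\<gamma>. solves_evol u (\<gamma> :: real \<Rightarrow> ('n,'a) vser)"
    using solves_evol_evol_curve by blast
  have "bastiani_smooth (\<lambda>u. evol_deriv 0 u (\<lambda>_. undefined) :: ('n,'a) vser)"
    unfolding bastiani_smooth_def
    by (intro exI[of _ evol_deriv] conjI allI impI ballI continuous_map_evol_deriv tendsto_evol_deriv refl)
      auto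
  moreover have "evol_deriv 0 u (\<lambda>_. undefined) = \<gamma> 1" if "solves_evol u \<gamma>" for u \<gamma>
    unfolding evol_deriv_0
    by (intro ext tangent_integral_eq_unique[of "evol_curve u" u \<gamma>] evol_curve_integral_eq
        solves_evol_integral_eq[OF that]) auto
  ultimately show "\<exists>F :: (real \<Rightarrow> ('n,'a) vser) \<Rightarrow> ('n,'a) vser. bastiani_smooth F \<and>
      (\<forall>u\<in>C0set. \<forall>\<gamma>. solves_evol u \<gamma> \<longrightarrow> F u = \<gamma> 1)"
    by blast
qed

theorem proposition5p7:
  shows "C0_regular_G TYPE('n::finite) TYPE(real) \<and> C0_regular_G TYPE('n::finite) TYPE(complex)"
  by (simp add: C0_regular_G_banach_field)

end
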